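(* For every $\alpha\ge1$, the function $E_{\alpha}^{*}(\cdot)$ on edge streams is $2$-almost-smooth.
   Context: Let $S=(e_1,\ldots,e_k)$ be a sequence of edges on vertex set $V=[n]$. An edge $e_i=\{u,v\}$ is $\alpha$-good with respect to $S$ if $d_i(u)\le\alpha$ and $d_i(v)\le\alpha$, where $d_i(x)=|\{e_j: j>i,\ x\in e_j\}|$ is the number of edges incident to $x$ appearing after $e_i$ in $S$. Let $E_\alpha(S)$ be the set of $\alpha$-good edges of $S$ and $E_\alpha^*(S)=\max_{t\in[k]}|E_\alpha(S_t)|$, where $S_t=(e_1,\ldots,e_t)$. For disjoint consecutive segments $A,B$, $AB$ is their concatenation. A function $f$ is $2$-almost-smooth if: (1) $f(A)\ge0$ for all $A$; (2) $f(B)\le f(AB)$ for all disjoint segments $A,B$; (3) $f(A)\le\mathrm{poly}(n)$; (4) for all disjoint consecutive segments $A,B,C$ with $f(AB)\ne0$, $f(ABC)\ne0$, $\frac{f(B)}{f(AB)}\le2\cdot\frac{f(BC)}{f(ABC)}$. *)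

theory Defs
  imports Main "HOL.Real"
begin

definition stream_on :: "nat \<Rightarrow> nat set list \<Rightarrow> bool" where
  "stream_on n S \<longleftrightarrow> (\<forall>e\<in>set S. card e = 2 \<and> e \<subseteq> {1..n})"

text \<open>d_i(x): number of edges incident to x appearing strictly after position i (0-based).\<close>
definition later_deg :: "nat set list \<Rightarrow> nat \<Rightarrow> nat \<Rightarrow> nat" where
  "later_deg S i x = card {j. i < j \<and> j < length S \<and> x \<in> S ! j}"

definition good_edge :: "real \<Rightarrow> nat set list \<Rightarrow> nat \<Rightarrow> bool" where
  "good_edge \<alpha> S i \<longleftrightarrow> (\<forall>x\<in>S ! i. real (later_deg S i x) \<le> \<alpha>)"

definition good_edges :: "real \<Rightarrow> nat set list \<Rightarrow> nat set set" where
  "good_edges \<alpha> S = {S ! i | i. i < length S \<and> good_edge \<alpha> S i}"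

definition Estar :: "real \<Rightarrow> nat set list \<Rightarrow> real" where
  "Estar \<alpha> S = real (Max (insert 0 {card (good_edges \<alpha> (take t S)) | t. 1 \<le> t \<and> t \<le> length S}))"

text \<open>2-almost-smooth; segments are streams on [n], concatenation is list append.
  The poly(n) bound: constants c, d (independent of n and of the stream).\<close>
definition almost_smooth2 :: "(nat set list \<Rightarrow> real) \<Rightarrow> bool" where
  "almost_smooth2 f \<longleftrightarrow>
     (\<forall>n A. stream_on n A \<longrightarrow> f A \<ge> 0) \<and>
     (\<forall>n A B. stream_on n A \<longrightarrow> stream_on n B \<longrightarrow> f B \<le> f (A @ B)) \<and>
     (\<exists>c d::nat. \<forall>n A. stream_on n A \<longrightarrow> f A \<le> real c * real n ^ d) \<and>
     (\<forall>n A B C. stream_on n A \<longrightarrow> stream_on n B \<longrightarrow> stream_on n C \<longrightarrow>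
        f (A @ B) \<noteq> 0 \<longrightarrow> f (A @ B @ C) \<noteq> 0 \<longrightarrow>
        f B / f (A @ B) \<le> 2 * (f (B @ C) / f (A @ B @ C)))"

end

theory Submission
  imports Defs
begin

text \<open>Goodness of an edge only depends on the part of the stream after it. Hence the good edges
  of a concatenation X @ Y are good edges of X or of Y, and every good edge of Y stays good in
  X @ Y. So the number of good edges is monotone under prepending and subadditive, and both
  properties pass to the maximum E* over prefixes. For the ratio condition, E*(ABC) is at most
  E*(AB) + E*(BC) (split the optimal prefix of ABC at the end of A), while E*(B) is at most both
  summands; together these give E*(B)/E*(AB) \<le> 2 E*(BC)/E*(ABC).\<close>

lemma good_edges_subset_set: "good_edges \<alpha> S \<subseteq> set S"
  unfolding good_edges_def by auto

lemma finite_good_edges: "finite (good_edges \<alpha> S)"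
  using finite_subset[OF good_edges_subset_set] by blast

lemma later_deg_append_shift: "later_deg (X @ Y) (length X + i) x = later_deg Y i x"
proof -
  have "{j. length X + i < j \<and> j < length (X @ Y) \<and> x \<in> (X @ Y) ! j}
      = (+) (length X) ` {j. i < j \<and> j < length Y \<and> x \<in> Y ! j}"
  proof (intro set_eqI iffI)
    fix j assume j: "j \<in> {j. length X + i < j \<and> j < length (X @ Y) \<and> x \<in> (X @ Y) ! j}"
    then have "x \<in> Y ! (j - length X)" by (auto simp: nth_append)
    with j show "j \<in> (+) (length X) ` {j. i < j \<and> j < length Y \<and> x \<in> Y ! j}"
      by (intro image_eqI[where x = "j - length X"]) auto
  qed (auto simp: nth_append)
  then show ?thesis
    unfolding later_deg_def by (simp add: card_image)
qed

lemma later_deg_le_append: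
  assumes "i < length X"
  shows "later_deg X i x \<le> later_deg (X @ Y) i x"
  unfolding later_deg_def using assms by (intro card_mono) (auto simp: nth_append)

lemma good_edge_append_shift_iff:
  "good_edge \<alpha> (X @ Y) (length X + i) \<longleftrightarrow> good_edge \<alpha> Y i"
  unfolding good_edge_def by (simp add: later_deg_append_shift)

lemma good_edge_appendD:
  assumes "i < length X" "good_edge \<alpha> (X @ Y) i"
  shows "good_edge \<alpha> X i"
  using assms later_deg_le_append[OF assms(1)] unfolding good_edge_def
  by (fastforce simp: nth_append intro: order_trans[OF of_nat_mono])

lemma good_edges_append_right: "good_edges \<alpha> Y \<subseteq> good_edges \<alpha> (X @ Y)"
proof
  fix e assume "e \<in> good_edges \<alpha> Y"
  then obtain i where "e = Y ! i" "i < length Y" "good_edge \<alpha> Y i"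
    unfolding good_edges_def by auto
  then show "e \<in> good_edges \<alpha> (X @ Y)"
    unfolding good_edges_def
    by (intro CollectI exI[of _ "length X + i"]) (simp add: good_edge_append_shift_iff)
qed

lemma good_edges_append_subset:
  "good_edges \<alpha> (X @ Y) \<subseteq> good_edges \<alpha> X \<union> good_edges \<alpha> Y"
proof
  fix e assume "e \<in> good_edges \<alpha> (X @ Y)"
  then obtain i where i: "e = (X @ Y) ! i" "i < length (X @ Y)" "good_edge \<alpha> (X @ Y) i"
    unfolding good_edges_def by auto
  show "e \<in> good_edges \<alpha> X \<union> good_edges \<alpha> Y"
  proof (cases "i < length X")
    case True
    with i have "e \<in> good_edges \<alpha> X"
      unfolding good_edges_def by (auto simp: nth_append dest: good_edge_appendD)
    then show ?thesis ..
  next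
    case False
    then obtain k where "i = length X + k" by (metis le_add_diff_inverse not_le)
    with i have "e \<in> good_edges \<alpha> Y"
      unfolding good_edges_def by (auto simp: good_edge_append_shift_iff)
    then show ?thesis ..
  qed
qed

lemma card_good_edges_append_right:
  "card (good_edges \<alpha> Y) \<le> card (good_edges \<alpha> (X @ Y))"
  by (intro card_mono finite_good_edges good_edges_append_right)

lemma card_good_edges_append_le:
  "card (good_edges \<alpha> (X @ Y)) \<le> card (good_edges \<alpha> X) + card (good_edges \<alpha> Y)"
  using card_mono[OF _ good_edges_append_subset] card_Un_le finite_good_edges
  by (metis finite_UnI le_trans)

lemma card_good_edges_take_le_Estar:
  "real (card (good_edges \<alpha> (take t S))) \<le> Estar \<alpha> S"
proof (cases "t = 0 \<or> S = []")
  case True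
  then have "good_edges \<alpha> (take t S) = {}" by (auto simp: good_edges_def)
  then show ?thesis by (simp add: Estar_def)
next
  case False
  then have "card (good_edges \<alpha> (take (min t (length S)) S))
      \<in> {card (good_edges \<alpha> (take t S)) | t. 1 \<le> t \<and> t \<le> length S}"
    by (intro CollectI exI[of _ "min t (length S)"]) (auto simp: Suc_le_eq)
  then show ?thesis
    unfolding Estar_def by (simp add: min_def split: if_splits)
qed

lemma Estar_attained: "\<exists>t. Estar \<alpha> S = real (card (good_edges \<alpha> (take t S)))"
proof -
  let ?M = "insert 0 {card (good_edges \<alpha> (take t S)) | t. 1 \<le> t \<and> t \<le> length S}"
  have "?M \<subseteq> insert 0 ((\<lambda>t. card (good_edges \<alpha> (take t S))) ` {..length S})" by auto
  then have "Max ?M \<in> ?M" by (intro Max_in) (auto intro: finite_subset)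
  then consider "Max ?M = 0" | t where "Max ?M = card (good_edges \<alpha> (take t S))"
    by auto
  then show ?thesis
  proof cases
    case 1
    then show ?thesis
      unfolding Estar_def by (intro exI[of _ 0]) (simp add: good_edges_def)
  qed (auto simp: Estar_def)
qed

lemma Estar_nonneg: "0 \<le> Estar \<alpha> S"
  by (simp add: Estar_def)

lemma Estar_append_left_mono: "Estar \<alpha> B \<le> Estar \<alpha> (A @ B)"
proof -
  obtain t where "Estar \<alpha> B = real (card (good_edges \<alpha> (take t B)))"
    using Estar_attained by blast
  also have "\<dots> \<le> real (card (good_edges \<alpha> (A @ take t B)))"
    using card_good_edges_append_right by simp
  also have "A @ take t B = take (length A + t) (A @ B)" by simp
  also have "real (card (good_edges \<alpha> \<dots>)) \<le> Estar \<alpha> (A @ B)"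
    by (rule card_good_edges_take_le_Estar)
  finally show ?thesis .
qed

lemma Estar_append_right_mono: "Estar \<alpha> B \<le> Estar \<alpha> (B @ C)"
proof -
  obtain t where "Estar \<alpha> B = real (card (good_edges \<alpha> (take t B)))"
    using Estar_attained by blast
  also have "take t B = take (min t (length B)) (B @ C)" by (simp add: min_def)
  also have "real (card (good_edges \<alpha> \<dots>)) \<le> Estar \<alpha> (B @ C)"
    by (rule card_good_edges_take_le_Estar)
  finally show ?thesis .
qed

lemma Estar_overlap_subadditive:
  "Estar \<alpha> (A @ B @ C) \<le> Estar \<alpha> (A @ B) + Estar \<alpha> (B @ C)"
proof -
  obtain t where "Estar \<alpha> (A @ B @ C) = real (card (good_edges \<alpha> (take t (A @ B @ C))))"
    using Estar_attained by blast
  also have "take t (A @ B @ C) = take t A @ take (t - length A) (B @ C)" by simp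
  also have "real (card (good_edges \<alpha> \<dots>))
      \<le> real (card (good_edges \<alpha> (take t A))) + real (card (good_edges \<alpha> (take (t - length A) (B @ C))))"
    using card_good_edges_append_le by (metis of_nat_add of_nat_le_iff)
  also have "take t A = take (min t (length A)) (A @ B)" by (simp add: min_def)
  also have "real (card (good_edges \<alpha> \<dots>)) + real (card (good_edges \<alpha> (take (t - length A) (B @ C))))
      \<le> Estar \<alpha> (A @ B) + Estar \<alpha> (B @ C)"
    by (intro add_mono card_good_edges_take_le_Estar)
  finally show ?thesis .
qed

lemma Estar_le_square:
  assumes "stream_on n S"
  shows "Estar \<alpha> S \<le> real n ^ 2"
proof -
  obtain t where t: "Estar \<alpha> S = real (card (good_edges \<alpha> (take t S)))"
    using Estar_attained by blast
  have "good_edges \<alpha> (take t S) \<subseteq> {e. e \<subseteq> {1..n} \<and> card e = 2}"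
    using good_edges_subset_set[of \<alpha> "take t S"] set_take_subset[of t S] assms
    unfolding stream_on_def by blast
  then have "card (good_edges \<alpha> (take t S)) \<le> card {e. e \<subseteq> {1..n} \<and> card e = 2}"
    by (intro card_mono) auto
  also have "\<dots> = n choose 2" by (simp add: n_subsets)
  also have "\<dots> \<le> n ^ 2"
    by (cases "2 \<le> n") (auto intro: binomial_le_pow simp: binomial_eq_0)
  finally show ?thesis using t by (metis of_nat_le_iff of_nat_power)
qed

lemma ratio_le_twice_ratio:
  fixes b x y z :: real
  assumes "0 \<le> b" "b \<le> x" "b \<le> y" "z \<le> x + y" "0 < x" "0 < z"
  shows "b / x \<le> 2 * (y / z)"
proof -
  have "b * z \<le> b * x + b * y"
    using assms by (metis distrib_left mult_left_mono)
  also have "\<dots> \<le> y * x + x * y"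
    using assms by (intro add_mono mult_right_mono mult_left_mono) auto
  finally have "b * z \<le> 2 * y * x" by (simp add: mult.commute)
  with assms show ?thesis by (simp add: field_simps)
qed

theorem lemma3p3:
  fixes \<alpha> :: real
  assumes "\<alpha> \<ge> 1"
  shows "almost_smooth2 (Estar \<alpha>)"
  unfolding almost_smooth2_def
proof (intro conjI allI impI)
  show "\<exists>c d::nat. \<forall>n A. stream_on n A \<longrightarrow> Estar \<alpha> A \<le> real c * real n ^ d"
    using Estar_le_square by (intro exI[of _ 1] exI[of _ 2]) simp
next
  fix A B C :: "nat set list"
  assume "Estar \<alpha> (A @ B) \<noteq> 0" "Estar \<alpha> (A @ B @ C) \<noteq> 0"
  then show "Estar \<alpha> B / Estar \<alpha> (A @ B) \<le> 2 * (Estar \<alpha> (B @ C) / Estar \<alpha> (A @ B @ C))"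
    using Estar_nonneg[of \<alpha>] Estar_append_left_mono[of \<alpha> B A]
      Estar_append_right_mono[of \<alpha> B C] Estar_overlap_subadditive[of \<alpha> A B C]
    by (intro ratio_le_twice_ratio) (auto simp: order_le_less)
qed (simp_all add: Estar_nonneg Estar_append_left_mono)

end
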